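(* Let $p\ge 1$, $c>0$ and $\beta>0$ be constants. The boundary value problem $$x'''+c\,x^p\, x''=0\ \text{ on } [0,\infty),\qquad x(0)=0=x'(0),\qquad \lim_{t\to\infty}x'(t)=\beta$$ has at most one solution (i.e., its solution is unique). *)

theory Defs
  imports Complex_Main
begin

text \<open>A (classical) solution on [0,\<infinity>) of the boundary value problem
  x''' + c x^p x'' = 0,  x(0) = 0 = x'(0),  x'(t) \<rightarrow> \<beta> as t \<rightarrow> \<infinity>.
  Derivatives are one-sided at 0 (taken within [0,\<infinity>)). Since p is a real
  exponent, x^p is the real power (powr), meaningful for x \<ge> 0; a solution is
  required to be nonnegative so that the equation is well defined.\<close>

definition bvp_solution :: "real \<Rightarrow> real \<Rightarrow> real \<Rightarrow> (real \<Rightarrow> real) \<Rightarrow> bool" where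
  "bvp_solution p c \<beta> x \<longleftrightarrow>
     (\<exists>x1 x2 x3 :: real \<Rightarrow> real.
        (\<forall>t\<ge>0. (x has_real_derivative x1 t) (at t within {0..})
              \<and> (x1 has_real_derivative x2 t) (at t within {0..})
              \<and> (x2 has_real_derivative x3 t) (at t within {0..})
              \<and> x t \<ge> 0
              \<and> x3 t + c * (x t powr p) * x2 t = 0)
        \<and> x 0 = 0 \<and> x1 0 = 0
        \<and> (x1 \<longlongrightarrow> \<beta>) at_top)"

end

theory Submission
  imports Defs "HOL-Analysis.Analysis"
begin

text \<open>For every \<open>l > 0\<close> the map \<open>x(t) \<mapsto> l powr (1/p) * x(l t)\<close> sends solutions of
  \<open>x''' + c x\<^sup>p x'' = 0\<close> to solutions. A solution of the boundary value problem has
  \<open>x''(0) > 0\<close>: \<open>x'' exp(c \<integral>x\<^sup>p)\<close> is constant, so \<open>x''(0) \<le> 0\<close> would force \<open>x' \<le> 0\<close>,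
  against \<open>x' \<rightarrow> \<beta> > 0\<close>. Hence a second solution \<open>y\<close> can be rescaled to have the initial
  data \<open>(0, 0, x''(0))\<close> of \<open>x\<close>. Since \<open>s \<mapsto> s\<^sup>p\<close> is locally Lipschitz on \<open>[0,\<infinity>)\<close> for
  \<open>p \<ge> 1\<close>, the initial value problem has unique solutions (Gronwall for the squared distance
  of the two jets), so \<open>x(t) = l powr (1/p) * y(l t)\<close>. Comparing the limits \<open>\<beta>\<close> and
  \<open>l powr (1/p + 1) * \<beta>\<close> of \<open>x'\<close> gives \<open>l = 1\<close>.\<close>

lemma DERIV_nonpos_imp_le_Icc:
  fixes f f' :: "real \<Rightarrow> real"
  assumes "a \<le> b"
    and "\<And>x. a \<le> x \<Longrightarrow> x \<le> b \<Longrightarrow> (f has_real_derivative f' x) (at x within {a..b})"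
    and "\<And>x. a \<le> x \<Longrightarrow> x \<le> b \<Longrightarrow> f' x \<le> 0"
  shows "f b \<le> f a"
proof -
  obtain x where x: "x \<in> {a..b}" "f b - f a = f' x * (b - a)"
    using mvt_very_simple[OF assms(1), of f "\<lambda>x h. f' x * h"] assms(2)
    by (auto simp: has_field_derivative_def)
  have "f' x * (b - a) \<le> 0"
    using assms(1,3) x(1) by (simp add: mult_nonpos_nonneg)
  with x(2) show ?thesis by simp
qed

lemma gronwall_Icc:
  fixes E E' :: "real \<Rightarrow> real" and K T :: real
  assumes "T \<ge> 0"
    and deriv: "\<And>t. 0 \<le> t \<Longrightarrow> t \<le> T \<Longrightarrow> (E has_real_derivative E' t) (at t within {0..T})"
    and growth: "\<And>t. 0 \<le> t \<Longrightarrow> t \<le> T \<Longrightarrow> E' t \<le> K * E t"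
  shows "E T \<le> exp (K * T) * E 0"
proof -
  define g where "g t = exp (- K * t) * E t" for t
  have "g T \<le> g 0"
  proof (rule DERIV_nonpos_imp_le_Icc[OF \<open>T \<ge> 0\<close>])
    fix t assume t: "0 \<le> t" "t \<le> T"
    show "(g has_real_derivative exp (- K * t) * (E' t - K * E t)) (at t within {0..T})"
      unfolding g_def by (rule derivative_eq_intros deriv[OF t] refl | simp add: algebra_simps)+
    show "exp (- K * t) * (E' t - K * E t) \<le> 0"
      using growth[OF t] by (simp add: mult_nonneg_nonpos)
  qed
  then have "exp (- K * T) * E T \<le> E 0" by (simp add: g_def)
  then show ?thesis by (simp add: exp_minus field_simps)
qed

lemma powr_diff_le:
  fixes a b M p :: real
  assumes "p \<ge> 1" "0 \<le> b" "b \<le> a" "a \<le> M"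
  shows "a powr p - b powr p \<le> p * M powr (p - 1) * (a - b)"
proof (cases "b = a")
  case False
  then have "b < a" using assms by simp
  have "continuous_on {b..a} (\<lambda>s. s powr p)"
    by (rule continuous_on_powr') (use assms in auto)
  moreover have "\<And>z. b < z \<Longrightarrow> z < a \<Longrightarrow> (\<lambda>s. s powr p) differentiable (at z)"
    using assms has_real_derivative_powr real_differentiable_def by (metis le_less_trans)
  ultimately obtain l z where z: "b < z" "z < a" "DERIV (\<lambda>s. s powr p) z :> l"
      "a powr p - b powr p = (a - b) * l"
    using MVT[OF \<open>b < a\<close>] by blast
  have "l = p * z powr (p - 1)"
    using DERIV_unique[OF z(3) has_real_derivative_powr] z assms by auto
  moreover have "z powr (p - 1) \<le> M powr (p - 1)"
    using z assms by (intro powr_mono2) auto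
  ultimately show ?thesis
    using z assms by (simp add: mult.commute mult_left_mono)
qed simp

lemma powr_lipschitz:
  fixes a b M p :: real
  assumes "p \<ge> 1" "0 \<le> a" "a \<le> M" "0 \<le> b" "b \<le> M"
  shows "\<bar>a powr p - b powr p\<bar> \<le> p * M powr (p - 1) * \<bar>a - b\<bar>"
proof (cases "b \<le> a")
  case True
  moreover have "b powr p \<le> a powr p" using True assms by (intro powr_mono2) auto
  ultimately show ?thesis using powr_diff_le[of p b a M] assms by simp
next
  case False
  moreover have "a powr p \<le> b powr p" using False assms by (intro powr_mono2) auto
  ultimately show ?thesis using powr_diff_le[of p a b M] assms by simp
qed

lemma powr_mult_lipschitz:
  fixes a b w z M p :: real
  assumes "p \<ge> 1" "0 \<le> a" "a \<le> M" "0 \<le> b" "b \<le> M" "\<bar>w\<bar> \<le> M"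
  shows "\<bar>a powr p * w - b powr p * z\<bar> \<le> p * M powr p * \<bar>a - b\<bar> + M powr p * \<bar>w - z\<bar>"
proof -
  have M: "M * M powr (p - 1) = M powr p"
    using assms by (cases "M = 0") (auto simp: powr_mult_base)
  have "\<bar>a powr p * w - b powr p * z\<bar> = \<bar>(a powr p - b powr p) * w + b powr p * (w - z)\<bar>"
    by (simp add: algebra_simps)
  also have "\<dots> \<le> \<bar>a powr p - b powr p\<bar> * \<bar>w\<bar> + b powr p * \<bar>w - z\<bar>"
    by (rule order_trans[OF abs_triangle_ineq]) (simp add: abs_mult)
  also have "\<dots> \<le> (p * M powr (p - 1) * \<bar>a - b\<bar>) * M + M powr p * \<bar>w - z\<bar>"
  proof (rule add_mono)
    show "\<bar>a powr p - b powr p\<bar> * \<bar>w\<bar> \<le> (p * M powr (p - 1) * \<bar>a - b\<bar>) * M"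
      using assms powr_lipschitz[OF assms(1-5)] by (intro mult_mono) auto
    show "b powr p * \<bar>w - z\<bar> \<le> M powr p * \<bar>w - z\<bar>"
      using assms by (intro mult_right_mono powr_mono2) auto
  qed
  also have "\<dots> = p * M powr p * \<bar>a - b\<bar> + M powr p * \<bar>w - z\<bar>"
    by (simp flip: M add: algebra_simps)
  finally show ?thesis .
qed

lemma cross_terms_le_sum_squares:
  fixes e0 e1 e2 d A B :: real
  assumes "A \<ge> 0" "B \<ge> 0" "\<bar>d\<bar> \<le> A * \<bar>e0\<bar> + B * \<bar>e2\<bar>"
  shows "2 * e0 * e1 + 2 * e1 * e2 + 2 * e2 * d \<le> (2 + A + 2 * B) * (e0\<^sup>2 + e1\<^sup>2 + e2\<^sup>2)"
proof -
  have "2 * e0 * e1 \<le> e0\<^sup>2 + e1\<^sup>2" "2 * e1 * e2 \<le> e1\<^sup>2 + e2\<^sup>2"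
    using sum_squares_bound[of e0 e1] sum_squares_bound[of e1 e2] by (simp_all add: mult.assoc)
  moreover have "2 * e2 * d \<le> A * e0\<^sup>2 + A * e2\<^sup>2 + 2 * (B * e2\<^sup>2)"
  proof -
    have "2 * e2 * d \<le> 2 * \<bar>e2\<bar> * (A * \<bar>e0\<bar> + B * \<bar>e2\<bar>)"
      using assms(3) abs_ge_self[of "e2 * d"] mult_left_mono[OF assms(3), of "2 * \<bar>e2\<bar>"]
      by (simp add: abs_mult mult.assoc)
    also have "\<dots> = A * (2 * \<bar>e0\<bar> * \<bar>e2\<bar>) + 2 * B * e2\<^sup>2"
      by (simp add: algebra_simps power2_eq_square flip: abs_mult)
    also have "\<dots> \<le> A * (e0\<^sup>2 + e2\<^sup>2) + 2 * B * e2\<^sup>2"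
      using sum_squares_bound[of "\<bar>e0\<bar>" "\<bar>e2\<bar>"] assms(1) by (simp add: mult_left_mono mult.assoc)
    also have "\<dots> = A * e0\<^sup>2 + A * e2\<^sup>2 + 2 * (B * e2\<^sup>2)"
      by (simp add: algebra_simps)
    finally show ?thesis .
  qed
  moreover have "0 \<le> A * e1\<^sup>2" "0 \<le> B * e0\<^sup>2" "0 \<le> B * e1\<^sup>2" "0 \<le> e0\<^sup>2" "0 \<le> e2\<^sup>2"
    using assms by simp_all
  moreover have "(2 + A + 2 * B) * (e0\<^sup>2 + e1\<^sup>2 + e2\<^sup>2) = 2 * e0\<^sup>2 + 2 * e1\<^sup>2 + 2 * e2\<^sup>2
      + A * e0\<^sup>2 + A * e1\<^sup>2 + A * e2\<^sup>2 + 2 * (B * e0\<^sup>2) + 2 * (B * e1\<^sup>2) + 2 * (B * e2\<^sup>2)"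
    by (simp add: algebra_simps)
  ultimately show ?thesis by linarith
qed

lemma linear_ode_integrating_factor:
  fixes w w' a :: "real \<Rightarrow> real" and T :: real
  assumes "T \<ge> 0" and "continuous_on {0..T} a"
    and deriv: "\<And>t. 0 \<le> t \<Longrightarrow> t \<le> T \<Longrightarrow> (w has_real_derivative w' t) (at t within {0..T})"
    and ode: "\<And>t. 0 \<le> t \<Longrightarrow> t \<le> T \<Longrightarrow> w' t + a t * w t = 0"
  shows "w T * exp (integral {0..T} a) = w 0"
proof -
  define h where "h t = w t * exp (integral {0..t} a)" for t
  have "(h has_real_derivative 0) (at t within {0..T})" if "t \<in> {0..T}" for t
  proof -
    have dexp: "((\<lambda>t. exp (integral {0..t} a)) has_real_derivative exp (integral {0..t} a) * a t)
        (at t within {0..T})"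
      using DERIV_chain2[OF DERIV_exp integral_has_real_derivative[OF assms(2) that]] .
    have "(h has_real_derivative w t * (exp (integral {0..t} a) * a t)
        + w' t * exp (integral {0..t} a)) (at t within {0..T})"
      unfolding h_def by (rule DERIV_mult'[OF deriv dexp]) (use that in auto)
    moreover have "w t * (exp (integral {0..t} a) * a t) + w' t * exp (integral {0..t} a)
        = exp (integral {0..t} a) * (w' t + a t * w t)"
      by (simp add: algebra_simps)
    ultimately show ?thesis using ode that by simp
  qed
  then obtain k where "\<forall>t\<in>{0..T}. h t = k"
    using has_field_derivative_zero_constant[of "{0..T}" h] by auto
  then have "h T = h 0" using \<open>T \<ge> 0\<close> by simp
  then show ?thesis by (simp add: h_def)
qed

lemma continuous_on_Icc_abs_bound:
  fixes f :: "real \<Rightarrow> real"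
  assumes "continuous_on {a..b} f"
  obtains M where "\<And>t. t \<in> {a..b} \<Longrightarrow> \<bar>f t\<bar> \<le> M"
proof -
  obtain M where "\<forall>y\<in>f ` {a..b}. norm y \<le> M"
    using compact_imp_bounded[OF compact_continuous_image[OF assms compact_Icc]]
    unfolding bounded_iff by blast
  then show thesis using that[of M] by auto
qed

definition ode_solution ::
    "real \<Rightarrow> real \<Rightarrow> (real \<Rightarrow> real) \<Rightarrow> (real \<Rightarrow> real) \<Rightarrow> (real \<Rightarrow> real) \<Rightarrow> (real \<Rightarrow> real) \<Rightarrow> bool"
  where "ode_solution p c u u1 u2 u3 \<longleftrightarrow>
    (\<forall>t\<ge>0. (u has_real_derivative u1 t) (at t within {0..})
          \<and> (u1 has_real_derivative u2 t) (at t within {0..})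
          \<and> (u2 has_real_derivative u3 t) (at t within {0..})
          \<and> u t \<ge> 0
          \<and> u3 t + c * (u t powr p) * u2 t = 0)"

lemma bvp_solution_iff:
  "bvp_solution p c \<beta> x \<longleftrightarrow>
    (\<exists>x1 x2 x3. ode_solution p c x x1 x2 x3 \<and> x 0 = 0 \<and> x1 0 = 0 \<and> (x1 \<longlongrightarrow> \<beta>) at_top)"
  unfolding bvp_solution_def ode_solution_def by blast

lemma ode_solutionD:
  assumes "ode_solution p c u u1 u2 u3" "S \<subseteq> {0..}" "t \<in> S"
  shows "(u has_real_derivative u1 t) (at t within S)"
    and "(u1 has_real_derivative u2 t) (at t within S)"
    and "(u2 has_real_derivative u3 t) (at t within S)"
    and "u t \<ge> 0"
    and "u3 t = - c * (u t powr p) * u2 t"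
proof -
  have "t \<ge> 0" using assms(2,3) by auto
  then have "(u has_real_derivative u1 t) (at t within {0..})"
      "(u1 has_real_derivative u2 t) (at t within {0..})"
      "(u2 has_real_derivative u3 t) (at t within {0..})"
      "u t \<ge> 0" "u3 t + c * (u t powr p) * u2 t = 0"
    using assms(1) unfolding ode_solution_def by blast+
  then show "(u has_real_derivative u1 t) (at t within S)"
      "(u1 has_real_derivative u2 t) (at t within S)"
      "(u2 has_real_derivative u3 t) (at t within S)"
      "u t \<ge> 0" "u3 t = - c * (u t powr p) * u2 t"
    using DERIV_subset[OF _ assms(2)] by (blast, blast, blast, blast, linarith)
qed

lemma ode_solutions_third_derivative_lipschitz:
  fixes u u1 u2 u3 v v1 v2 v3 :: "real \<Rightarrow> real"
  assumes p: "p \<ge> 1" and c: "c \<ge> 0"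
    and su: "ode_solution p c u u1 u2 u3" and sv: "ode_solution p c v v1 v2 v3"
  obtains A B where "A \<ge> 0" "B \<ge> 0"
    and "\<And>t. t \<in> {0..T} \<Longrightarrow> \<bar>u3 t - v3 t\<bar> \<le> A * \<bar>u t - v t\<bar> + B * \<bar>u2 t - v2 t\<bar>"
proof -
  define S where "S = {0..T}"
  have S: "S \<subseteq> {0..}" by (auto simp: S_def)
  note du = ode_solutionD[OF su S] and dv = ode_solutionD[OF sv S]
  have "continuous_on S (\<lambda>t. \<bar>u t\<bar> + \<bar>v t\<bar> + \<bar>u2 t\<bar> + \<bar>v2 t\<bar>)"
    using DERIV_continuous_on[OF du(1)] DERIV_continuous_on[OF dv(1)]
      DERIV_continuous_on[OF du(3)] DERIV_continuous_on[OF dv(3)]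
    by (intro continuous_intros)
  then obtain M where M: "\<And>t. t \<in> S \<Longrightarrow> \<bar>\<bar>u t\<bar> + \<bar>v t\<bar> + \<bar>u2 t\<bar> + \<bar>v2 t\<bar>\<bar> \<le> M"
    using continuous_on_Icc_abs_bound unfolding S_def by blast
  show thesis
  proof (rule that)
    show "c * p * M powr p \<ge> 0" "c * M powr p \<ge> 0" using c p by simp_all
  next
    fix t assume "t \<in> {0..T}"
    then have t: "t \<in> S" by (simp add: S_def)
    show "\<bar>u3 t - v3 t\<bar> \<le> (c * p * M powr p) * \<bar>u t - v t\<bar> + (c * M powr p) * \<bar>u2 t - v2 t\<bar>"
    proof -
      have "\<bar>u t powr p * u2 t - v t powr p * v2 t\<bar>
          \<le> p * M powr p * \<bar>u t - v t\<bar> + M powr p * \<bar>u2 t - v2 t\<bar>"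
        using M[OF t] du(4)[OF t] dv(4)[OF t] by (intro powr_mult_lipschitz[OF p]) auto
      then have "c * \<bar>u t powr p * u2 t - v t powr p * v2 t\<bar>
          \<le> c * (p * M powr p * \<bar>u t - v t\<bar> + M powr p * \<bar>u2 t - v2 t\<bar>)"
        using c by (rule mult_left_mono)
      moreover have "\<bar>u3 t - v3 t\<bar> = \<bar>c * (u t powr p * u2 t - v t powr p * v2 t)\<bar>"
        by (simp add: du(5)[OF t] dv(5)[OF t] algebra_simps)
      ultimately have "\<bar>u3 t - v3 t\<bar> \<le> c * (p * M powr p * \<bar>u t - v t\<bar> + M powr p * \<bar>u2 t - v2 t\<bar>)"
        using c by (simp add: abs_mult)
      then show ?thesis by (simp add: algebra_simps)
    qed
  qed
qed

lemma ode_solution_unique: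
  fixes u u1 u2 u3 v v1 v2 v3 :: "real \<Rightarrow> real"
  assumes p: "p \<ge> 1" and c: "c \<ge> 0"
    and su: "ode_solution p c u u1 u2 u3" and sv: "ode_solution p c v v1 v2 v3"
    and init: "u 0 = v 0" "u1 0 = v1 0" "u2 0 = v2 0"
    and T: "T \<ge> 0"
  shows "u T = v T" "u1 T = v1 T" "u2 T = v2 T"
proof -
  obtain A B where "A \<ge> 0" "B \<ge> 0" and rhs_lipschitz:
      "\<And>t. t \<in> {0..T} \<Longrightarrow> \<bar>u3 t - v3 t\<bar> \<le> A * \<bar>u t - v t\<bar> + B * \<bar>u2 t - v2 t\<bar>"
    using ode_solutions_third_derivative_lipschitz[OF p c su sv] by blast
  have S: "{0..T} \<subseteq> {0..}" by auto
  note du = ode_solutionD[OF su S] and dv = ode_solutionD[OF sv S]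
  define E where "E t = (u t - v t)\<^sup>2 + (u1 t - v1 t)\<^sup>2 + (u2 t - v2 t)\<^sup>2" for t
  define E' where "E' t = 2 * (u t - v t) * (u1 t - v1 t) + 2 * (u1 t - v1 t) * (u2 t - v2 t)
      + 2 * (u2 t - v2 t) * (u3 t - v3 t)" for t
  have "E T \<le> exp ((2 + A + 2 * B) * T) * E 0"
  proof (rule gronwall_Icc[OF T])
    fix t assume "0 \<le> t" "t \<le> T"
    then have t: "t \<in> {0..T}" by simp
    show "(E has_real_derivative E' t) (at t within {0..T})"
      unfolding E_def E'_def
      by (rule derivative_eq_intros du(1-3)[OF t] dv(1-3)[OF t] refl | simp add: algebra_simps)+
    show "E' t \<le> (2 + A + 2 * B) * E t"
      unfolding E_def E'_def
      by (rule cross_terms_le_sum_squares[OF \<open>A \<ge> 0\<close> \<open>B \<ge> 0\<close> rhs_lipschitz[OF t]])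
  qed
  also have "E 0 = 0" using init by (simp add: E_def)
  finally have "E T \<le> 0" by simp
  moreover have "0 \<le> (u T - v T)\<^sup>2" "0 \<le> (u1 T - v1 T)\<^sup>2" "0 \<le> (u2 T - v2 T)\<^sup>2"
    by simp_all
  ultimately have "(u T - v T)\<^sup>2 = 0" "(u1 T - v1 T)\<^sup>2 = 0" "(u2 T - v2 T)\<^sup>2 = 0"
    unfolding E_def by linarith+
  then show "u T = v T" "u1 T = v1 T" "u2 T = v2 T" by simp_all
qed

lemma ode_solution_second_derivative_pos:
  assumes p: "p > 0" and sol: "ode_solution p c y y1 y2 y3"
    and "y1 0 = 0" and lim: "(y1 \<longlongrightarrow> \<beta>) at_top" and "\<beta> > 0"
  shows "y2 0 > 0"
proof (rule ccontr)
  assume "\<not> y2 0 > 0"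
  have y2_nonpos: "y2 T \<le> 0" if "T \<ge> 0" for T
  proof -
    have S: "{0..T} \<subseteq> {0..}" by auto
    note dy = ode_solutionD[OF sol S]
    have "continuous_on {0..T} (\<lambda>t. y t powr p)"
      by (rule continuous_on_powr'[OF DERIV_continuous_on[OF dy(1)] continuous_on_const])
        (use dy(4) p in auto)
    then have "continuous_on {0..T} (\<lambda>t. c * y t powr p)"
      by (rule continuous_on_mult[OF continuous_on_const])
    then have "y2 T * exp (integral {0..T} (\<lambda>t. c * y t powr p)) = y2 0"
    proof (rule linear_ode_integrating_factor[OF \<open>T \<ge> 0\<close>])
      fix t assume "0 \<le> t" "t \<le> T"
      then have t: "t \<in> {0..T}" by simp
      show "(y2 has_real_derivative y3 t) (at t within {0..T})" by (rule dy(3)[OF t])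
      show "y3 t + c * y t powr p * y2 t = 0" using dy(5)[OF t] by simp
    qed
    with \<open>\<not> y2 0 > 0\<close> show ?thesis
      by (metis exp_gt_zero linorder_not_le zero_less_mult_iff)
  qed
  have "y1 T \<le> 0" if "T \<ge> 0" for T
  proof -
    have "y1 T \<le> y1 0"
    proof (rule DERIV_nonpos_imp_le_Icc[OF that])
      fix t assume "0 \<le> t" "t \<le> T"
      then show "(y1 has_real_derivative y2 t) (at t within {0..T})" "y2 t \<le> 0"
        using ode_solutionD(2)[OF sol, of "{0..T}" t] y2_nonpos by auto
    qed
    with \<open>y1 0 = 0\<close> show ?thesis by simp
  qed
  then have "\<forall>\<^sub>F T in at_top. y1 T \<le> 0"
    by (intro eventually_mono[OF eventually_ge_at_top[of "0::real"]]) auto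
  then have "\<beta> \<le> 0" using tendsto_upperbound[OF lim] by simp
  with \<open>\<beta> > 0\<close> show False by simp
qed

lemma has_real_derivative_rescale:
  fixes f f' :: "real \<Rightarrow> real"
  assumes "l > 0" "t \<ge> 0"
    and "(f has_real_derivative f' (l * t)) (at (l * t) within {0..})"
  shows "((\<lambda>t. k * f (l * t)) has_real_derivative k * l * f' (l * t)) (at t within {0..})"
proof -
  have df: "(f has_real_derivative f' (l * t)) (at (l * t) within (\<lambda>s. l * s) ` {0..})"
    by (rule DERIV_subset[OF assms(3)]) (use assms(1) in auto)
  have dl: "((\<lambda>s. l * s) has_real_derivative l) (at t within {0..})"
    by (rule derivative_eq_intros refl | simp)+
  have "((\<lambda>t. f (l * t)) has_real_derivative f' (l * t) * l) (at t within {0..})"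
    using DERIV_image_chain[OF df dl] by (simp add: o_def)
  from DERIV_cmult[OF this, of k] show ?thesis by (simp add: mult_ac)
qed

lemma ode_solution_rescale:
  assumes p: "p > 0" and l: "l > 0" and sol: "ode_solution p c y y1 y2 y3"
  shows "ode_solution p c (\<lambda>t. l powr (1/p) * y (l * t)) (\<lambda>t. l powr (1/p + 1) * y1 (l * t))
      (\<lambda>t. l powr (1/p + 2) * y2 (l * t)) (\<lambda>t. l powr (1/p + 3) * y3 (l * t))"
  unfolding ode_solution_def
proof (intro allI impI conjI)
  fix t :: real assume "t \<ge> 0"
  then have lt: "l * t \<in> {0..}" using l by simp
  note dy = ode_solutionD[OF sol order_refl lt]
  have step: "l powr a * l = l powr (a + 1)" for a
    using l by (simp add: powr_add)
  show "((\<lambda>t. l powr (1/p) * y (l * t)) has_real_derivative l powr (1/p + 1) * y1 (l * t))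
      (at t within {0..})"
    using has_real_derivative_rescale[where f = y and f' = y1 and k = "l powr (1/p)",
        OF l \<open>t \<ge> 0\<close> dy(1)]
    by (simp add: step)
  show "((\<lambda>t. l powr (1/p + 1) * y1 (l * t)) has_real_derivative l powr (1/p + 2) * y2 (l * t))
      (at t within {0..})"
    using has_real_derivative_rescale[where f = y1 and f' = y2 and k = "l powr (1/p + 1)",
        OF l \<open>t \<ge> 0\<close> dy(2)]
    by (simp add: step add.assoc)
  show "((\<lambda>t. l powr (1/p + 2) * y2 (l * t)) has_real_derivative l powr (1/p + 3) * y3 (l * t))
      (at t within {0..})"
    using has_real_derivative_rescale[where f = y2 and f' = y3 and k = "l powr (1/p + 2)",
        OF l \<open>t \<ge> 0\<close> dy(3)]
    by (simp add: step add.assoc)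
  show "0 \<le> l powr (1/p) * y (l * t)" using dy(4) by simp
  have pw: "(l powr (1/p) * y (l * t)) powr p = l * y (l * t) powr p"
    using l p dy(4) by (simp add: powr_mult powr_powr)
  have l3: "l * l powr (1/p + 2) = l powr (1/p + 3)"
    using step[of "1/p + 2"] by (simp add: mult.commute add.assoc)
  have "l powr (1/p + 3) * y3 (l * t)
      + c * (l powr (1/p) * y (l * t)) powr p * (l powr (1/p + 2) * y2 (l * t))
      = l powr (1/p + 3) * (y3 (l * t) + c * y (l * t) powr p * y2 (l * t))"
    unfolding pw l3[symmetric] by (simp add: algebra_simps)
  also have "\<dots> = 0"
    using dy(5) by simp
  finally show "l powr (1/p + 3) * y3 (l * t)
      + c * (l powr (1/p) * y (l * t)) powr p * (l powr (1/p + 2) * y2 (l * t)) = 0" .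
qed

lemma ode_solution_rescaled_eq:
  assumes p: "p \<ge> 1" and c: "c \<ge> 0"
    and sx: "ode_solution p c x x1 x2 x3" and sy: "ode_solution p c y y1 y2 y3"
    and "x 0 = 0" "x1 0 = 0" "y 0 = 0" "y1 0 = 0" and "x2 0 > 0" "y2 0 > 0"
  obtains l where "l > 0"
    and "\<And>T. T \<ge> 0 \<Longrightarrow> x T = l powr (1/p) * y (l * T)"
    and "\<And>T. T \<ge> 0 \<Longrightarrow> x1 T = l powr (1/p + 1) * y1 (l * T)"
proof -
  have "1/p + 2 > 0" using p by (simp add: add_pos_nonneg)
  \<comment> \<open>chosen so that the rescaled \<open>y\<close> has second derivative \<open>x2 0\<close> at \<open>0\<close>\<close>
  define l where "l = (x2 0 / y2 0) powr (1 / (1/p + 2))"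
  have "l > 0" using \<open>x2 0 > 0\<close> \<open>y2 0 > 0\<close> by (simp add: l_def)
  have "l powr (1/p + 2) = x2 0 / y2 0"
    using \<open>x2 0 > 0\<close> \<open>y2 0 > 0\<close> \<open>1/p + 2 > 0\<close> by (simp add: l_def powr_powr)
  then have "x2 0 = l powr (1/p + 2) * y2 (l * 0)"
    using \<open>y2 0 > 0\<close> by simp
  moreover have "x 0 = l powr (1/p) * y (l * 0)" "x1 0 = l powr (1/p + 1) * y1 (l * 0)"
    using assms(5-8) by simp_all
  moreover note sy' = ode_solution_rescale[OF _ \<open>l > 0\<close> sy]
  ultimately show thesis
    using that[OF \<open>l > 0\<close>] ode_solution_unique[OF p c sx sy'] p by simp
qed

lemma tendsto_at_top_rescale:
  fixes f :: "real \<Rightarrow> 'a::topological_space"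
  assumes "(f \<longlongrightarrow> L) at_top" "l > 0"
  shows "((\<lambda>t. f (l * t)) \<longlongrightarrow> L) at_top"
  using filterlim_compose[OF assms(1)
      filterlim_tendsto_pos_mult_at_top[OF tendsto_const assms(2) filterlim_ident]] .

theorem theorem2:
  fixes p c \<beta> :: real and x y :: "real \<Rightarrow> real"
  assumes "p \<ge> 1" and "c > 0" and "\<beta> > 0"
    and "bvp_solution p c \<beta> x" and "bvp_solution p c \<beta> y"
  shows "\<forall>t\<ge>0. x t = y t"
proof -
  obtain x1 x2 x3 where sx: "ode_solution p c x x1 x2 x3" "x 0 = 0" "x1 0 = 0" "(x1 \<longlongrightarrow> \<beta>) at_top"
    using assms(4) unfolding bvp_solution_iff by blast
  obtain y1 y2 y3 where sy: "ode_solution p c y y1 y2 y3" "y 0 = 0" "y1 0 = 0" "(y1 \<longlongrightarrow> \<beta>) at_top"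
    using assms(5) unfolding bvp_solution_iff by blast
  have "p > 0" using assms(1) by simp
  have "x2 0 > 0" "y2 0 > 0"
    using ode_solution_second_derivative_pos[OF \<open>p > 0\<close>] sx sy \<open>\<beta> > 0\<close> by blast+
  moreover have "c \<ge> 0" using \<open>c > 0\<close> by simp
  ultimately obtain l where "l > 0"
    and x_eq: "\<And>T. T \<ge> 0 \<Longrightarrow> x T = l powr (1/p) * y (l * T)"
    and x1_eq: "\<And>T. T \<ge> 0 \<Longrightarrow> x1 T = l powr (1/p + 1) * y1 (l * T)"
    using ode_solution_rescaled_eq[OF \<open>p \<ge> 1\<close> _ sx(1) sy(1) sx(2,3) sy(2,3)] by blast
  have "\<forall>\<^sub>F T in at_top. l powr (1/p + 1) * y1 (l * T) = x1 T"
    using x1_eq by (intro eventually_mono[OF eventually_ge_at_top[of "0::real"]]) auto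
  then have "(x1 \<longlongrightarrow> l powr (1/p + 1) * \<beta>) at_top"
    using tendsto_mult_left[OF tendsto_at_top_rescale[OF sy(4) \<open>l > 0\<close>]]
    by (rule tendsto_cong[THEN iffD1])
  then have "l powr (1/p + 1) * \<beta> = \<beta>"
    using sx(4) by (rule tendsto_unique[OF trivial_limit_at_top_linorder])
  moreover have "1/p + 1 > 0" using \<open>p > 0\<close> by (simp add: add_pos_pos)
  ultimately have "l = 1"
    using \<open>l > 0\<close> assms(3) powr_eq_one_iff_gen[of l "1/p + 1"] by auto
  then show ?thesis using x_eq by simp
qed

end
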